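(* Let $f\in\mathbb{R}[\mathbf{x}]$, $\mathscr{A}=\operatorname{supp}(f)$, and $\mathscr{B}=\frac12\operatorname{New}(f)\cap\mathbb{N}^n$. Define $\mathscr{B}_0=\emptyset$ and, for $p\ge1$, $\mathscr{B}_p=\{\beta\in\mathscr{B}:\exists\gamma\in\mathscr{B}\text{ with }\beta+\gamma\in\mathscr{A}\cup2\mathscr{B}_{p-1}\}$, and let $\mathscr{B}_*=\bigcup_{p\ge1}\mathscr{B}_p$. If $f=(\mathbf{x}^{\mathscr{B}})^\intercal\mathbf{G}\,\mathbf{x}^{\mathscr{B}}$ for some scaled diagonally dominant symmetric matrix $\mathbf{G}$ indexed by $\mathscr{B}$, then $f=(\mathbf{x}^{\mathscr{B}_*})^\intercal\tilde{\mathbf{G}}\,\mathbf{x}^{\mathscr{B}_*}$ for some scaled diagonally dominant symmetric matrix $\tilde{\mathbf{G}}$ indexed by $\mathscr{B}_*$.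
   Context: $\operatorname{New}(f)$ is the Newton polytope of $f$, the convex hull of $\operatorname{supp}(f)\subseteq\mathbb{N}^n$; $2S=\{2\beta:\beta\in S\}$; $\mathbf{x}^{S}=(\mathbf{x}^\beta)_{\beta\in S}$. A symmetric matrix $\mathbf{G}$ is diagonally dominant if $\mathbf{G}_{ii}\ge\sum_{j\ne i}|\mathbf{G}_{ij}|$ for every $i$, and scaled diagonally dominant if $\mathbf{D}\mathbf{G}\mathbf{D}$ is diagonally dominant for some positive definite diagonal matrix $\mathbf{D}$. *)

theory Defs
  imports "HOL-Analysis.Analysis"
begin

text \<open>Polynomials in R[x_1..x_n] are represented by their coefficient functions
  on exponent vectors (type 'n \<Rightarrow> nat, 'n a finite index type of variables),
  with finite support.\<close>

type_synonym 'n expo = "'n \<Rightarrow> nat"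
type_synonym 'n rpoly = "'n expo \<Rightarrow> real"

definition is_poly :: "'n rpoly \<Rightarrow> bool" where
  "is_poly f \<longleftrightarrow> finite {\<alpha>. f \<alpha> \<noteq> 0}"

definition supp :: "'n rpoly \<Rightarrow> 'n expo set" where
  "supp f = {\<alpha>. f \<alpha> \<noteq> 0}"

definition expo_vec :: "('n::finite) expo \<Rightarrow> real ^ 'n" where
  "expo_vec \<alpha> = (\<chi> i. real (\<alpha> i))"

definition Newton :: "('n::finite) rpoly \<Rightarrow> (real ^ 'n) set" where
  "Newton f = convex hull (expo_vec ` supp f)"

definition halfNewton :: "('n::finite) rpoly \<Rightarrow> 'n expo set" where
  "halfNewton f = {\<beta>. 2 *\<^sub>R expo_vec \<beta> \<in> Newton f}"

definition eadd :: "'n expo \<Rightarrow> 'n expo \<Rightarrow> 'n expo" where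
  "eadd \<beta> \<gamma> = (\<lambda>i. \<beta> i + \<gamma> i)"

definition gram_poly :: "'n expo set \<Rightarrow> ('n expo \<Rightarrow> 'n expo \<Rightarrow> real) \<Rightarrow> 'n rpoly" where
  "gram_poly I G = (\<lambda>\<alpha>. \<Sum>\<beta>\<in>I. \<Sum>\<gamma>\<in>I. if eadd \<beta> \<gamma> = \<alpha> then G \<beta> \<gamma> else 0)"

definition symmetric_on :: "'a set \<Rightarrow> ('a \<Rightarrow> 'a \<Rightarrow> real) \<Rightarrow> bool" where
  "symmetric_on I G \<longleftrightarrow> (\<forall>i\<in>I. \<forall>j\<in>I. G i j = G j i)"

definition diag_dominant_on :: "'a set \<Rightarrow> ('a \<Rightarrow> 'a \<Rightarrow> real) \<Rightarrow> bool" where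
  "diag_dominant_on I G \<longleftrightarrow> (\<forall>i\<in>I. G i i \<ge> (\<Sum>j\<in>I - {i}. \<bar>G i j\<bar>))"

definition sdd_on :: "'a set \<Rightarrow> ('a \<Rightarrow> 'a \<Rightarrow> real) \<Rightarrow> bool" where
  "sdd_on I G \<longleftrightarrow> (\<exists>d. (\<forall>i\<in>I. d i > 0) \<and> diag_dominant_on I (\<lambda>i j. d i * G i j * d j))"

fun Bseq :: "'n expo set \<Rightarrow> 'n expo set \<Rightarrow> nat \<Rightarrow> 'n expo set" where
  "Bseq A B 0 = {}"
| "Bseq A B (Suc p) = {\<beta>\<in>B. \<exists>\<gamma>\<in>B. eadd \<beta> \<gamma> \<in> A \<union> (\<lambda>b. eadd b b) ` Bseq A B p}"

definition Bstar :: "'n expo set \<Rightarrow> 'n expo set \<Rightarrow> 'n expo set" where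
  "Bstar A B = (\<Union>p\<in>{1..}. Bseq A B p)"

end

theory Submission
  imports Defs
begin

(* An entry G \<beta> \<gamma> with \<beta> outside B* only contributes to the exponent \<beta> + \<gamma>, which by
   the closure property of B* lies neither in supp f nor in 2 B*. Zeroing all entries whose
   exponent lies outside supp f \<union> 2 B* and restricting to B* therefore still represents f,
   keeps the diagonal on B* and only shrinks off-diagonal entries, so the diagonal scaling
   that makes G diagonally dominant works for the new matrix as well. *)

lemma eadd_commute: "eadd \<beta> \<gamma> = eadd \<gamma> \<beta>"
  unfolding eadd_def by (simp add: add.commute)

lemma finite_halfNewton:
  fixes f :: "('n::finite) rpoly"
  assumes "is_poly f"
  shows "finite (halfNewton f)"
proof -
  have "compact (Newton f)"
    using assms unfolding Newton_def is_poly_def supp_def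
    by (intro finite_imp_compact_convex_hull finite_imageI)
  then obtain M where M: "\<And>x. x \<in> Newton f \<Longrightarrow> norm x \<le> M"
    using compact_imp_bounded bounded_iff by metis
  have "\<beta> i \<le> nat \<lceil>M\<rceil>" if "\<beta> \<in> halfNewton f" for \<beta> i
  proof -
    have "2 * real (\<beta> i) = (2 *\<^sub>R expo_vec \<beta>) $ i"
      by (simp add: expo_vec_def)
    also have "\<dots> \<le> norm (2 *\<^sub>R expo_vec \<beta>)"
      using component_le_norm_cart abs_le_D1 by blast
    also have "\<dots> \<le> M"
      using that M unfolding halfNewton_def by blast
    finally show ?thesis by linarith
  qed
  then have "halfNewton f \<subseteq> Pi\<^sub>E UNIV (\<lambda>_. {..nat \<lceil>M\<rceil>})"
    unfolding PiE_UNIV_domain by blast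
  then show ?thesis
    by (rule finite_subset) (simp add: finite_PiE)
qed

lemma Bstar_subset: "Bstar A B \<subseteq> B"
proof -
  have "Bseq A B p \<subseteq> B" for p
    by (cases p) auto
  then show ?thesis
    unfolding Bstar_def by blast
qed

lemma in_BstarI:
  assumes "\<beta> \<in> B" "\<gamma> \<in> B" "eadd \<beta> \<gamma> \<in> A \<union> (\<lambda>b. eadd b b) ` Bstar A B"
  shows "\<beta> \<in> Bstar A B"
proof -
  obtain p where "eadd \<beta> \<gamma> \<in> A \<union> (\<lambda>b. eadd b b) ` Bseq A B p"
    using assms(3) unfolding Bstar_def by blast
  then have "\<beta> \<in> Bseq A B (Suc p)"
    using assms(1,2) by auto
  then show ?thesis
    unfolding Bstar_def by force
qed

lemma gram_poly_eq_on_subset: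
  assumes "finite B" "S \<subseteq> B"
    and "\<And>\<beta> \<gamma>. \<beta> \<in> B \<Longrightarrow> \<gamma> \<in> B \<Longrightarrow> eadd \<beta> \<gamma> = \<alpha> \<Longrightarrow> \<beta> \<in> S \<and> \<gamma> \<in> S"
  shows "gram_poly B G \<alpha> = gram_poly S G \<alpha>"
proof -
  let ?term = "\<lambda>(\<beta>, \<gamma>). if eadd \<beta> \<gamma> = \<alpha> then G \<beta> \<gamma> else 0"
  have "gram_poly B G \<alpha> = sum ?term (B \<times> B)"
    unfolding gram_poly_def by (simp add: sum.cartesian_product)
  also have "\<dots> = sum ?term (S \<times> S)"
    using assms by (intro sum.mono_neutral_right) (auto split: if_splits)
  also have "\<dots> = gram_poly S G \<alpha>"
    unfolding gram_poly_def by (simp add: sum.cartesian_product)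
  finally show ?thesis .
qed

lemma gram_poly_restrict_masked:
  assumes "finite B" "S \<subseteq> B" "supp (gram_poly B G) \<subseteq> K"
    and closed: "\<And>\<beta> \<gamma>. \<beta> \<in> B \<Longrightarrow> \<gamma> \<in> B \<Longrightarrow> eadd \<beta> \<gamma> \<in> K \<Longrightarrow> \<beta> \<in> S"
  shows "gram_poly B G = gram_poly S (\<lambda>\<beta> \<gamma>. if eadd \<beta> \<gamma> \<in> K then G \<beta> \<gamma> else 0)"
    (is "_ = gram_poly S ?G'")
proof
  fix \<alpha>
  show "gram_poly B G \<alpha> = gram_poly S ?G' \<alpha>"
  proof (cases "\<alpha> \<in> K")
    case True
    have "\<beta> \<in> S \<and> \<gamma> \<in> S" if "\<beta> \<in> B" "\<gamma> \<in> B" "eadd \<beta> \<gamma> = \<alpha>" for \<beta> \<gamma>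
      using closed[of \<beta> \<gamma>] closed[of \<gamma> \<beta>] that True by (auto simp: eadd_commute)
    then have "gram_poly B G \<alpha> = gram_poly S G \<alpha>"
      using assms(1,2) by (intro gram_poly_eq_on_subset)
    also have "\<dots> = gram_poly S ?G' \<alpha>"
      using True unfolding gram_poly_def by (intro sum.cong refl) auto
    finally show ?thesis .
  next
    case False
    then have "gram_poly B G \<alpha> = 0"
      using assms(3) unfolding supp_def by blast
    moreover have "gram_poly S ?G' \<alpha> = 0"
      using False unfolding gram_poly_def by (auto intro!: sum.neutral)
    ultimately show ?thesis
      by simp
  qed
qed

lemma sdd_on_subset_abs_le:
  assumes "finite B" "S \<subseteq> B" "sdd_on B G"
    and diag: "\<And>i. i \<in> S \<Longrightarrow> G' i i = G i i"
    and abs_le: "\<And>i j. \<bar>G' i j\<bar> \<le> \<bar>G i j\<bar>"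
  shows "sdd_on S G'"
proof -
  obtain d where d_pos: "\<forall>i\<in>B. d i > 0"
    and dd: "diag_dominant_on B (\<lambda>i j. d i * G i j * d j)"
    using assms(3) unfolding sdd_on_def by blast
  have "diag_dominant_on S (\<lambda>i j. d i * G' i j * d j)"
    unfolding diag_dominant_on_def
  proof
    fix i assume "i \<in> S"
    have "(\<Sum>j\<in>S - {i}. \<bar>d i * G' i j * d j\<bar>) \<le> (\<Sum>j\<in>S - {i}. \<bar>d i * G i j * d j\<bar>)"
      by (intro sum_mono) (simp add: abs_mult abs_le mult_left_mono mult_right_mono)
    also have "\<dots> \<le> (\<Sum>j\<in>B - {i}. \<bar>d i * G i j * d j\<bar>)"
      using assms(1,2) by (intro sum_mono2) auto
    also have "\<dots> \<le> d i * G' i i * d i"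
      using dd \<open>i \<in> S\<close> assms(2) diag unfolding diag_dominant_on_def by auto
    finally show "(\<Sum>j\<in>S - {i}. \<bar>d i * G' i j * d j\<bar>) \<le> d i * G' i i * d i" .
  qed
  then show ?thesis
    unfolding sdd_on_def using d_pos assms(2) by blast
qed

theorem proposition7p2:
  fixes f :: "('n::finite) rpoly" and G :: "'n expo \<Rightarrow> 'n expo \<Rightarrow> real"
  assumes "is_poly f"
    and "symmetric_on (halfNewton f) G"
    and "sdd_on (halfNewton f) G"
    and "f = gram_poly (halfNewton f) G"
  shows "\<exists>G'. symmetric_on (Bstar (supp f) (halfNewton f)) G'
            \<and> sdd_on (Bstar (supp f) (halfNewton f)) G'
            \<and> f = gram_poly (Bstar (supp f) (halfNewton f)) G'"
proof -
  define B where "B = halfNewton f"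
  define S where "S = Bstar (supp f) B"
  define K where "K = supp f \<union> (\<lambda>b. eadd b b) ` S"
  define G' where "G' = (\<lambda>\<beta> \<gamma>. if eadd \<beta> \<gamma> \<in> K then G \<beta> \<gamma> else 0)"
  have "finite B" "S \<subseteq> B"
    using finite_halfNewton[OF assms(1)] Bstar_subset unfolding B_def S_def by auto
  have "symmetric_on S G'"
    using assms(2) \<open>S \<subseteq> B\<close> unfolding symmetric_on_def G'_def B_def
    by (auto simp: eadd_commute)
  moreover have "sdd_on S G'"
    using \<open>finite B\<close> \<open>S \<subseteq> B\<close> assms(3)[folded B_def]
    by (rule sdd_on_subset_abs_le) (auto simp: B_def G'_def K_def)
  moreover have "f = gram_poly S G'"
  proof -
    have "\<beta> \<in> S" if "\<beta> \<in> B" "\<gamma> \<in> B" "eadd \<beta> \<gamma> \<in> K" for \<beta> \<gamma>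
      using in_BstarI[OF that[unfolded K_def S_def]] unfolding S_def .
    moreover have "supp f \<subseteq> K"
      unfolding K_def by blast
    ultimately have "gram_poly B G = gram_poly S G'"
      unfolding G'_def using \<open>finite B\<close> \<open>S \<subseteq> B\<close> assms(4)[folded B_def]
      by (intro gram_poly_restrict_masked) auto
    then show ?thesis
      using assms(4)[folded B_def] by simp
  qed
  ultimately show ?thesis
    unfolding S_def B_def by blast
qed

end
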